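(* Let $q$ be the semi-Markov kernel of a homogeneous $d$-dimensional multi-time Markov renewal chain, let $u=(\mathbbm{I}_s-q)^{(-1)}=\sum_{n\ge0}q^{(n)}$, and let $G\in\mathcal{M}_s(\mathbb{N}^d)$ be given. Then the multi-time Markov renewal equation $L=G+q*L$ in the unknown $L\in\mathcal{M}_s(\mathbb{N}^d)$ has a unique solution, given by $L=u*G$.
   Context: $E=\{1,\dots,s\}$; $\mathcal{M}_s(\mathbb{N}^d)$ is the set of functions $\mathbb{N}^d\to\mathbb{R}^{s\times s}$, with convolution $[A*B](k)=\sum_{l+l'=k}A(l)B(l')$, identity $\mathbbm{I}_s$ ($\mathbbm{I}_s(0_d)=I_s$, zero elsewhere), powers $A^{(0)}=\mathbbm{I}_s$, $A^{(n)}=A*A^{(n-1)}$, convolutional inverse $A^{(-1)}$. A homogeneous $d$-dimensional multi-time Markov renewal chain is a process $(J_n,S_n)_{n\in\mathbb{N}}$, $J_n\in E$, $S_n\in\mathbb{N}^d$, $S_0=0_d$, $S_n<S_{n+1}$ (componentwise $\le$, not equal), with a.s. $\mathbb{P}(J_{n+1}=j,S_{n+1}-S_n=k\mid J_{0:n},S_{0:n})=q_{J_nj}(k)$ where $q_{ij}(k)=\mathbb{P}(J_{n+1}=j,S_{n+1}-S_n=k\mid J_n=i)$ is independent of $n$ (so $q(0_d)=O_s$). *)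

theory Defs
  imports "HOL-Analysis.Analysis"
begin

text \<open>Multi-indices in N^d are functions 'd => nat for a finite index type 'd
  (d = CARD('d)); s x s real matrices are real^'s^'s, with E = UNIV :: 's set.
  An element of M_s(N^d) is a function ('d => nat) => real^'s^'s.\<close>

type_synonym ('d, 's) mfun = "('d \<Rightarrow> nat) \<Rightarrow> real^'s^'s"

definition conv :: "('d::finite, 's::finite) mfun \<Rightarrow> ('d, 's) mfun \<Rightarrow> ('d, 's) mfun" where
  "conv A B k = (\<Sum>l \<in> {l. \<forall>i. l i \<le> k i}. A l ** B (\<lambda>i. k i - l i))"

definition unit_mfun :: "('d::finite, 's::finite) mfun" where
  "unit_mfun k = (if k = (\<lambda>_. 0) then mat 1 else 0)"

fun conv_pow :: "('d::finite, 's::finite) mfun \<Rightarrow> nat \<Rightarrow> ('d, 's) mfun" where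
  "conv_pow A 0 = unit_mfun"
| "conv_pow A (Suc n) = conv A (conv_pow A n)"

text \<open>Semi-Markov kernel of a homogeneous multi-time Markov renewal chain:
  q_ij(k) = P(J_{n+1}=j, S_{n+1}-S_n=k | J_n=i); nonnegative, q(0_d) = O,
  and each row is a probability distribution on E x N^d.\<close>
definition semi_markov_kernel :: "('d::finite, 's::finite) mfun \<Rightarrow> bool" where
  "semi_markov_kernel q \<longleftrightarrow>
     (\<forall>k i j. 0 \<le> q k $ i $ j) \<and>
     q (\<lambda>_. 0) = 0 \<and>
     (\<forall>i. ((\<lambda>k. \<Sum>j\<in>UNIV. q k $ i $ j) has_sum 1) UNIV)"

end

theory Submission
  imports Defs
begin

text \<open>Write |k| for the total degree of a multi-index k. Since q(0) = O, every term
  q(l) L(k - l) of (q * L)(k) with a nonzero q(l) has |k - l| < |k|: convolution with q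
  strictly lowers the degree. Hence q^(n)(k) = O for n > |k|, the series u is pointwise
  a finite sum, and at k the product u * G agrees with the finite sum of the q^(n) * G
  for n \<le> |k|, for which the renewal identity follows from q^(n+1) = q * q^(n) and
  associativity. Uniqueness is well-founded induction on |k|.\<close>

lemma matrix_add_rdistrib: "((A::real^'n^'m) + B) ** (C::real^'p^'n) = A ** C + B ** C"
  by (vector matrix_matrix_mult_def sum.distrib[symmetric] field_simps)

lemma matrix_sum_ldistrib:
  "finite S \<Longrightarrow> (A::real^'n^'m) ** (\<Sum>x\<in>S. f x :: real^'p^'n) = (\<Sum>x\<in>S. A ** f x)"
  by (induct S rule: finite_induct) (auto simp: matrix_add_ldistrib)

lemma matrix_sum_rdistrib:
  "finite S \<Longrightarrow> (\<Sum>x\<in>S. f x :: real^'n^'m) ** (A::real^'p^'n) = (\<Sum>x\<in>S. f x ** A)"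
  by (induct S rule: finite_induct) (auto simp: matrix_add_rdistrib)

definition multi_degree :: "('d::finite \<Rightarrow> nat) \<Rightarrow> nat" where
  "multi_degree k = (\<Sum>i\<in>UNIV. k i)"

lemma finite_multi_index_box: "finite {l::'d::finite \<Rightarrow> nat. \<forall>i. l i \<le> k i}"
proof -
  have "{l::'d \<Rightarrow> nat. \<forall>i. l i \<le> k i} = PiE UNIV (\<lambda>i. {..k i})"
    by (auto simp: PiE_def Pi_def)
  then show ?thesis by (simp add: finite_PiE)
qed

lemma multi_degree_diff:
  "\<forall>i. l i \<le> k i \<Longrightarrow> multi_degree (\<lambda>i. k i - l i) + multi_degree l = multi_degree k"
  unfolding multi_degree_def by (simp add: sum.distrib[symmetric])

lemma multi_degree_mono: "\<forall>i. l i \<le> k i \<Longrightarrow> multi_degree l \<le> multi_degree k"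
  using multi_degree_diff by (metis le_add2)

lemma multi_degree_pos: "l \<noteq> (\<lambda>_. 0) \<Longrightarrow> 0 < multi_degree l"
proof -
  assume "l \<noteq> (\<lambda>_. 0)"
  then obtain i where "l i \<noteq> 0" by auto
  moreover have "l i \<le> (\<Sum>j\<in>UNIV. l j)" by (rule member_le_sum) auto
  ultimately show ?thesis unfolding multi_degree_def by linarith
qed

lemma multi_degree_diff_less:
  assumes "\<forall>i. l i \<le> k i" "l \<noteq> (\<lambda>_. 0)"
  shows "multi_degree (\<lambda>i. k i - l i) < multi_degree k"
  using multi_degree_diff[OF assms(1)] multi_degree_pos[OF assms(2)] by linarith

lemma conv_unit_left: "conv unit_mfun G = G"
proof
  fix k
  have "conv unit_mfun G k = (\<Sum>l\<in>{l. \<forall>i. l i \<le> k i}. if l = (\<lambda>_. 0) then G k else 0)"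
    unfolding conv_def by (rule sum.cong) (auto simp: unit_mfun_def)
  also have "\<dots> = G k"
    using finite_multi_index_box[of k] by (simp add: sum.delta')
  finally show "conv unit_mfun G k = G k" .
qed

lemma conv_assoc:
  fixes A B C :: "('d::finite, 's::finite) mfun"
  shows "conv A (conv B C) = conv (conv A B) C"
proof
  fix k :: "'d \<Rightarrow> nat"
  let ?S1 = "Sigma {l. \<forall>i. l i \<le> k i} (\<lambda>l. {m. \<forall>i. m i \<le> k i - l i})"
  let ?S2 = "Sigma {p. \<forall>i. p i \<le> k i} (\<lambda>p. {l. \<forall>i. l i \<le> p i})"
  have "conv A (conv B C) k = (\<Sum>(l, m)\<in>?S1. A l ** (B m ** C (\<lambda>i. k i - l i - m i)))"
    unfolding conv_def
    by (simp add: matrix_sum_ldistrib finite_multi_index_box sum.Sigma[symmetric])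
  also have "\<dots> = (\<Sum>(p, l)\<in>?S2. (A l ** B (\<lambda>i. p i - l i)) ** C (\<lambda>i. k i - p i))"
  proof (rule sum.reindex_bij_witness[where i = "\<lambda>(p, l). (l, \<lambda>i. p i - l i)"
        and j = "\<lambda>(l, m). (\<lambda>i. l i + m i, l)"])
    fix a assume "a \<in> ?S2"
    then show "(case a of (p, l) \<Rightarrow> (l, \<lambda>i. p i - l i)) \<in> ?S1"
      by (auto simp: fun_eq_iff intro: diff_le_mono order_trans)
  next
    fix a assume "a \<in> ?S1"
    then show "(case a of (l, m) \<Rightarrow> (\<lambda>i. l i + m i, l)) \<in> ?S2"
      by (auto simp: fun_eq_iff) (metis le_diff_conv2 add.commute)
  qed (auto simp: fun_eq_iff matrix_mul_assoc diff_diff_left)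
  also have "\<dots> = conv (conv A B) C k"
    unfolding conv_def
    by (simp add: matrix_sum_rdistrib finite_multi_index_box sum.Sigma[symmetric])
  finally show "conv A (conv B C) k = conv (conv A B) C k" .
qed

lemma conv_sum_left:
  "finite N \<Longrightarrow> conv (\<lambda>k. \<Sum>n\<in>N. A n k) B m = (\<Sum>n\<in>N. conv (A n) B m)"
  unfolding conv_def by (simp add: matrix_sum_rdistrib sum.swap[of _ N])

lemma conv_sum_right:
  "finite N \<Longrightarrow> conv A (\<lambda>k. \<Sum>n\<in>N. B n k) m = (\<Sum>n\<in>N. conv A (B n) m)"
  unfolding conv_def by (simp add: matrix_sum_ldistrib sum.swap[of _ N])

lemma conv_cong_lower_degree:
  assumes "q (\<lambda>_. 0) = 0"
    and "\<And>m. multi_degree m < multi_degree k \<Longrightarrow> X m = Y m"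
  shows "conv q X k = conv q Y k"
  unfolding conv_def
proof (rule sum.cong)
  fix l assume l: "l \<in> {l. \<forall>i. l i \<le> k i}"
  show "q l ** X (\<lambda>i. k i - l i) = q l ** Y (\<lambda>i. k i - l i)"
  proof (cases "l = (\<lambda>_. 0)")
    case True
    then show ?thesis using assms(1) by simp
  next
    case False
    then have "multi_degree (\<lambda>i. k i - l i) < multi_degree k"
      using multi_degree_diff_less l by auto
    then show ?thesis using assms(2) by simp
  qed
qed simp

lemma conv_pow_eq_0:
  assumes "q (\<lambda>_. 0) = 0"
  shows "multi_degree m < n \<Longrightarrow> conv_pow q n m = 0"
proof (induction n arbitrary: m)
  case 0
  then show ?case by simp
next
  case (Suc n)
  have "conv q (conv_pow q n) m = conv q (\<lambda>_. 0) m"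
    by (rule conv_cong_lower_degree[of q, OF assms]) (use Suc in auto)
  also have "\<dots> = 0" unfolding conv_def by simp
  finally show ?case by simp
qed

lemma suminf_conv_pow_eq_sum:
  assumes "q (\<lambda>_. 0) = 0" "multi_degree l < M"
  shows "(\<Sum>n. conv_pow q n l) = (\<Sum>n<M. conv_pow q n l)"
  by (rule suminf_finite) (use conv_pow_eq_0[of q, OF assms(1)] assms(2) in auto)

lemma conv_suminf_conv_pow_eq_sum:
  assumes "q (\<lambda>_. 0) = 0" "multi_degree m < M"
  shows "conv (\<lambda>k. \<Sum>n. conv_pow q n k) G m = (\<Sum>n<M. conv (conv_pow q n) G m)"
proof -
  have "conv (\<lambda>k. \<Sum>n. conv_pow q n k) G m = conv (\<lambda>k. \<Sum>n<M. conv_pow q n k) G m"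
    unfolding conv_def
  proof (rule sum.cong)
    fix l assume "l \<in> {l. \<forall>i. l i \<le> m i}"
    then have "multi_degree l < M"
      using multi_degree_mono[of l m] assms(2) by auto
    then show "(\<Sum>n. conv_pow q n l) ** G (\<lambda>i. m i - l i)
        = (\<Sum>n<M. conv_pow q n l) ** G (\<lambda>i. m i - l i)"
      using suminf_conv_pow_eq_sum[of q, OF assms(1)] by simp
  qed simp
  then show ?thesis by (simp add: conv_sum_left)
qed

lemma renewal_solution:
  fixes q G u :: "('d::finite, 's::finite) mfun"
  assumes "q (\<lambda>_. 0) = 0"
    and u: "u = (\<lambda>k. \<Sum>n. conv_pow q n k)"
  shows "conv u G = (\<lambda>k. G k + conv q (conv u G) k)"
proof
  fix k :: "'d \<Rightarrow> nat"
  define N where "N = multi_degree k"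
  have "conv u G k = (\<Sum>n<Suc N. conv (conv_pow q n) G k)"
    unfolding u by (rule conv_suminf_conv_pow_eq_sum[of q, OF assms(1)]) (simp add: N_def)
  also have "\<dots> = G k + (\<Sum>n<N. conv q (conv (conv_pow q n) G) k)"
    unfolding sum.lessThan_Suc_shift by (simp add: conv_unit_left conv_assoc)
  also have "(\<Sum>n<N. conv q (conv (conv_pow q n) G) k)
      = conv q (\<lambda>m. \<Sum>n<N. conv (conv_pow q n) G m) k"
    by (simp add: conv_sum_right)
  also have "\<dots> = conv q (conv u G) k"
    by (rule conv_cong_lower_degree[of q, OF assms(1)])
       (simp add: u conv_suminf_conv_pow_eq_sum[of q, OF assms(1)] N_def)
  finally show "conv u G k = G k + conv q (conv u G) k" .
qed

lemma renewal_unique: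
  fixes q G L1 L2 :: "('d::finite, 's::finite) mfun"
  assumes "q (\<lambda>_. 0) = 0"
    and L1: "L1 = (\<lambda>k. G k + conv q L1 k)"
    and L2: "L2 = (\<lambda>k. G k + conv q L2 k)"
  shows "L1 = L2"
proof
  fix k
  show "L1 k = L2 k"
  proof (induction k rule: measure_induct_rule[of multi_degree])
    case (less k)
    have "L1 k = G k + conv q L1 k" by (subst L1) simp
    also have "conv q L1 k = conv q L2 k"
      by (rule conv_cong_lower_degree[of q, OF assms(1)]) (use less in auto)
    also have "G k + conv q L2 k = L2 k" by (subst (2) L2) simp
    finally show ?case .
  qed
qed

theorem corollary3:
  fixes q G u :: "('d::finite, 's::finite) mfun"
  assumes "semi_markov_kernel q"
    and "u = (\<lambda>k. \<Sum>n. conv_pow q n k)"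
  shows "(\<exists>!L. L = (\<lambda>k. G k + conv q L k))
         \<and> conv u G = (\<lambda>k. G k + conv q (conv u G) k)"
proof -
  have q0: "q (\<lambda>_. 0) = 0"
    using assms(1) unfolding semi_markov_kernel_def by simp
  have "conv u G = (\<lambda>k. G k + conv q (conv u G) k)"
    using renewal_solution[of q, OF q0 assms(2)] .
  then show ?thesis
    using renewal_unique[of q, OF q0] by blast
qed

end
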